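(* Assume the finite-sum setting, that $f$ is $L$-smooth, and that $\tilde\nabla_K$ satisfies the strong growth condition with constant $\rho_K\ge1$. Let $(x_n)$ be generated by SNAG with batch size $K$ and let $\varepsilon>0$. (i) If $f$ is convex with minimizer $x^\ast$, and $s=\frac{1}{L\rho_K}$, $\eta_n=\frac{1}{L\rho_K^2}\frac{n+1}{2}$, $\beta=1$, $\alpha_n=\frac{n^2/(n+1)}{2+n^2/(n+1)}$, then $\mathbb{E}[f(x_n)-f^\ast]\le\varepsilon$ for every $n\ge\rho_K\sqrt{\frac{2L}{\varepsilon}}\|x_0-x^\ast\|$. (ii) If $f$ is $\mu$-strongly convex and $s=\frac{1}{L\rho_K}$, $\eta_n=\eta=\frac{1}{\rho_K\sqrt{\mu L}}$, $\beta=1-\frac{1}{\rho_K}\sqrt{\frac\mu L}$, $\alpha_n=\alpha=\frac{1}{1+\frac{1}{\rho_K}\sqrt{\mu/L}}$, then $\mathbb{E}[f(x_n)-f^\ast]\le\varepsilon$ for every $n\ge\rho_K\sqrt{\frac L\mu}\log\!\left(\frac{2(f(x_0)-f^\ast)}{\varepsilon}\right)$.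
   Context: Finite-sum setting: $N\ge2$, $f_i:\mathbb{R}^d\to\mathbb{R}$ continuously differentiable, $f=\frac1N\sum_i f_i$, $f^\ast=\min f$ (attained). $f$ is $L$-smooth if $\nabla f$ is $L$-Lipschitz. For $K\in\{1,\dots,N\}$, $B$ is a uniformly random subset of $\{1,\dots,N\}$ of size $K$ and $\tilde\nabla_K(x)=\frac1K\sum_{i\in B}\nabla f_i(x)$. Strong growth condition (SGC) with constant $\rho_K\ge1$: $\mathbb{E}\|\tilde\nabla_K(x)\|^2\le\rho_K\|\nabla f(x)\|^2$ for all $x$. SNAG: given $x_0=z_0\in\mathbb{R}^d$, $s>0$, $\beta\in[0,1]$, $\alpha_n\in[0,1]$, $\eta_n\ge0$, iterate $y_n=\alpha_nx_n+(1-\alpha_n)z_n$, $x_{n+1}=y_n-s\tilde\nabla_K(y_n)$, $z_{n+1}=\beta z_n+(1-\beta)y_n-\eta_n\tilde\nabla_K(y_n)$, where the same batch is used in both updates of iteration $n$ and batches are independent across iterations. *)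

theory Defs
  imports "HOL-Analysis.Analysis" "HOL-Probability.Probability"
begin

definition batches :: "nat \<Rightarrow> nat \<Rightarrow> nat set set" where
  "batches N K = {B. B \<subseteq> {..<N} \<and> card B = K}"

text \<open>Full objective and its gradient (g i is the gradient of f_i).\<close>
definition favg :: "nat \<Rightarrow> (nat \<Rightarrow> 'a \<Rightarrow> real) \<Rightarrow> 'a \<Rightarrow> real" where
  "favg N fs x = (1 / real N) * (\<Sum>i<N. fs i x)"

definition gavg :: "nat \<Rightarrow> (nat \<Rightarrow> 'a \<Rightarrow> 'a::real_vector) \<Rightarrow> 'a \<Rightarrow> 'a" where
  "gavg N g x = (1 / real N) *\<^sub>R (\<Sum>i<N. g i x)"

definition sgrad :: "nat \<Rightarrow> (nat \<Rightarrow> 'a \<Rightarrow> 'a::real_vector) \<Rightarrow> nat set \<Rightarrow> 'a \<Rightarrow> 'a" where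
  "sgrad K g B x = (1 / real K) *\<^sub>R (\<Sum>i\<in>B. g i x)"

definition snag_step ::
  "nat \<Rightarrow> (nat \<Rightarrow> 'a \<Rightarrow> 'a::real_vector) \<Rightarrow> real \<Rightarrow> real \<Rightarrow> (nat \<Rightarrow> real) \<Rightarrow> (nat \<Rightarrow> real)
     \<Rightarrow> nat \<Rightarrow> 'a \<times> 'a \<Rightarrow> nat set \<Rightarrow> 'a \<times> 'a" where
  "snag_step K g s \<beta> \<alpha> \<eta> n st B =
     (let x = fst st; z = snd st;
          y = \<alpha> n *\<^sub>R x + (1 - \<alpha> n) *\<^sub>R z;
          v = sgrad K g B y
      in (y - s *\<^sub>R v, \<beta> *\<^sub>R z + (1 - \<beta>) *\<^sub>R y - \<eta> n *\<^sub>R v))"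

text \<open>Distribution of the state (x_n, z_n) of SNAG: batches drawn uniformly
  among K-subsets, independently across iterations.\<close>
fun snag_pmf ::
  "nat \<Rightarrow> nat \<Rightarrow> (nat \<Rightarrow> 'a \<Rightarrow> 'a::real_vector) \<Rightarrow> real \<Rightarrow> real \<Rightarrow> (nat \<Rightarrow> real) \<Rightarrow> (nat \<Rightarrow> real)
     \<Rightarrow> 'a \<Rightarrow> nat \<Rightarrow> ('a \<times> 'a) pmf" where
  "snag_pmf N K g s \<beta> \<alpha> \<eta> x0 0 = return_pmf (x0, x0)"
| "snag_pmf N K g s \<beta> \<alpha> \<eta> x0 (Suc n) =
     bind_pmf (snag_pmf N K g s \<beta> \<alpha> \<eta> x0 n)
       (\<lambda>st. map_pmf (snag_step K g s \<beta> \<alpha> \<eta> n st) (pmf_of_set (batches N K)))"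

definition strongly_convex :: "real \<Rightarrow> ('a::real_normed_vector \<Rightarrow> real) \<Rightarrow> bool" where
  "strongly_convex \<mu> f \<longleftrightarrow> (\<forall>x y t. 0 \<le> t \<and> t \<le> 1 \<longrightarrow>
     f (t *\<^sub>R x + (1 - t) *\<^sub>R y) \<le> t * f x + (1 - t) * f y - \<mu> / 2 * t * (1 - t) * (norm (x - y))\<^sup>2)"

end

theory Submission
  imports Defs
begin

text \<open>
  The proof is a Lyapunov argument for the energy
  \<open>E\<^sub>k = A\<^sub>k (f(x\<^sub>k) - f\<^sup>*) + \<lambda>/2 \<parallel>z\<^sub>k - x\<^sup>*\<parallel>\<^sup>2\<close>.
  Given the past, the mini-batch gradient at \<open>y\<^sub>k\<close> is unbiased with second moment at most
  \<open>\<rho> \<parallel>\<nabla>f(y\<^sub>k)\<parallel>\<^sup>2\<close> (strong growth). The descent lemma bounds the expectation of \<open>f(x\<^sub>k\<^sub>+\<^sub>1)\<close>,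
  expanding the square bounds that of \<open>\<parallel>z\<^sub>k\<^sub>+\<^sub>1 - x\<^sup>*\<parallel>\<^sup>2\<close>, and the step sizes make the two
  \<open>\<parallel>\<nabla>f(y\<^sub>k)\<parallel>\<^sup>2\<close> terms cancel. Since \<open>z\<^sub>k - y\<^sub>k\<close> is a multiple of \<open>y\<^sub>k - x\<^sub>k\<close>, the (strong)
  convexity inequality at \<open>y\<^sub>k\<close> absorbs the remaining inner product. The expected energy is
  therefore non-increasing for \<open>A\<^sub>k = k\<^sup>2/(4L\<rho>\<^sup>2)\<close>, \<open>\<lambda> = 1\<close> in the convex case, and contracts by
  \<open>1 - q\<close>, \<open>q = \<surd>(\<mu>/L)/\<rho>\<close>, for \<open>A\<^sub>k = 1\<close>, \<open>\<lambda> = \<mu>\<close> in the strongly convex case.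
\<close>

section \<open>Smooth and convex functions\<close>

lemma has_field_derivative_along_line:
  fixes F :: "'a::real_inner \<Rightarrow> real"
  assumes D: "\<And>x. (F has_derivative (\<lambda>h. G x \<bullet> h)) (at x)"
  shows "((\<lambda>u. F (y + u *\<^sub>R h)) has_field_derivative G (y + t *\<^sub>R h) \<bullet> h) (at t within S)"
proof -
  have "((\<lambda>u. F (y + u *\<^sub>R h)) has_derivative (\<lambda>u. G (y + t *\<^sub>R h) \<bullet> (u *\<^sub>R h))) (at t within S)"
    by (rule has_derivative_compose[OF _ D]) (auto intro!: derivative_eq_intros)
  then show ?thesis
    unfolding has_field_derivative_def by (rule has_derivative_eq_rhs) (simp add: fun_eq_iff)
qed

lemma smooth_upper_bound:
  fixes F :: "'a::real_inner \<Rightarrow> real"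
  assumes D: "\<And>x. (F has_derivative (\<lambda>h. G x \<bullet> h)) (at x)"
    and Lip: "\<And>x y. norm (G x - G y) \<le> L * norm (x - y)"
  shows "F (y + h) \<le> F y + G y \<bullet> h + L/2 * (norm h)\<^sup>2"
proof -
  define \<psi> where "\<psi> t = F (y + t *\<^sub>R h) - t * (G y \<bullet> h) - L/2 * t\<^sup>2 * (norm h)\<^sup>2" for t
  have "\<psi> 1 \<le> \<psi> 0"
  proof (rule DERIV_nonpos_imp_nonincreasing[of 0 1 \<psi>])
    fix t :: real assume "0 \<le> t" "t \<le> 1"
    have "DERIV \<psi> t :> (G (y + t *\<^sub>R h) - G y) \<bullet> h - L * t * (norm h)\<^sup>2"
      unfolding \<psi>_def
      by (auto intro!: derivative_eq_intros has_field_derivative_along_line[OF D]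
          simp: inner_diff_left)
    moreover have "(G (y + t *\<^sub>R h) - G y) \<bullet> h \<le> norm (G (y + t *\<^sub>R h) - G y) * norm h"
      by (rule norm_cauchy_schwarz)
    moreover have "\<dots> \<le> L * norm (t *\<^sub>R h) * norm h"
      using Lip[of "y + t *\<^sub>R h" y] by (intro mult_right_mono) auto
    ultimately show "\<exists>d. DERIV \<psi> t :> d \<and> d \<le> 0"
      using \<open>0 \<le> t\<close> by (intro exI[of _ "(G (y + t *\<^sub>R h) - G y) \<bullet> h - L * t * (norm h)\<^sup>2"])
        (simp add: power2_eq_square mult.assoc)
  qed simp
  then show ?thesis unfolding \<psi>_def by simp
qed

lemma convex_on_gradient_inequality:
  fixes F :: "'a::real_inner \<Rightarrow> real"
  assumes C: "convex_on UNIV F"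
    and D: "\<And>x. (F has_derivative (\<lambda>h. G x \<bullet> h)) (at x)"
  shows "F y + G y \<bullet> (x - y) \<le> F x"
proof -
  define \<phi> where "\<phi> t = F (y + t *\<^sub>R (x - y))" for t
  have "convex_on UNIV \<phi>"
  proof (rule convex_onI)
    fix t a b :: real assume "0 < t" "t < 1"
    moreover have "y + ((1 - t) * a + t * b) *\<^sub>R (x - y)
        = (1 - t) *\<^sub>R (y + a *\<^sub>R (x - y)) + t *\<^sub>R (y + b *\<^sub>R (x - y))"
      by (simp add: algebra_simps)
    ultimately show "\<phi> ((1 - t) *\<^sub>R a + t *\<^sub>R b) \<le> (1 - t) * \<phi> a + t * \<phi> b"
      unfolding \<phi>_def using convex_onD[OF C, of t] by simp
  qed simp
  moreover have "(\<phi> has_field_derivative (G y \<bullet> (x - y))) (at 0 within UNIV)"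
    unfolding \<phi>_def using has_field_derivative_along_line[OF D, of y "x - y" 0] by simp
  ultimately have "G y \<bullet> (x - y) * (1 - 0) \<le> \<phi> 1 - \<phi> 0"
    by (intro convex_on_imp_above_tangent) auto
  then show ?thesis unfolding \<phi>_def by simp
qed

lemma norm_convex_combination_squared:
  fixes x y :: "'a::real_inner"
  shows "(norm ((1 - t) *\<^sub>R x + t *\<^sub>R y))\<^sup>2
           = (1 - t) * (norm x)\<^sup>2 + t * (norm y)\<^sup>2 - t * (1 - t) * (norm (x - y))\<^sup>2"
  unfolding power2_norm_eq_inner
  by (simp add: inner_commute algebra_simps)

text \<open>\<open>F - \<mu>/2 \<parallel>\<cdot>\<parallel>\<^sup>2\<close> is convex, so the convex gradient inequality applies to it.\<close>
lemma strongly_convex_gradient_inequality: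
  fixes F :: "'a::real_inner \<Rightarrow> real"
  assumes C: "strongly_convex \<mu> F"
    and D: "\<And>x. (F has_derivative (\<lambda>h. G x \<bullet> h)) (at x)"
  shows "F y + G y \<bullet> (x - y) + \<mu>/2 * (norm (x - y))\<^sup>2 \<le> F x"
proof -
  define H where "H x = F x - \<mu>/2 * (norm x)\<^sup>2" for x
  have "convex_on UNIV H"
  proof (rule convex_onI)
    fix t :: real and a b :: 'a assume t: "0 < t" "t < 1"
    have "F (t *\<^sub>R b + (1 - t) *\<^sub>R a)
        \<le> t * F b + (1 - t) * F a - \<mu>/2 * t * (1 - t) * (norm (b - a))\<^sup>2"
      using C t unfolding strongly_convex_def by auto
    then show "H ((1 - t) *\<^sub>R a + t *\<^sub>R b) \<le> (1 - t) * H a + t * H b"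
      unfolding H_def norm_convex_combination_squared
      by (simp add: add.commute norm_minus_commute algebra_simps add_divide_distrib diff_divide_distrib)
  qed simp
  moreover have "(H has_derivative (\<lambda>h. (G x - \<mu> *\<^sub>R x) \<bullet> h)) (at x)" for x
  proof -
    have "(H has_derivative (\<lambda>h. G x \<bullet> h - \<mu>/2 * (h \<bullet> x + x \<bullet> h))) (at x)"
      unfolding H_def power2_norm_eq_inner by (auto intro!: derivative_eq_intros D)
    then show ?thesis
      by (simp add: inner_diff_left inner_commute algebra_simps)
  qed
  ultimately have "H y + (G y - \<mu> *\<^sub>R y) \<bullet> (x - y) \<le> H x"
    by (rule convex_on_gradient_inequality)
  then show ?thesis unfolding H_def power2_norm_eq_inner
    by (simp add: inner_diff_left inner_diff_right inner_commute algebra_simps)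
qed

lemma gradient_zero_at_minimum:
  fixes F :: "'a::real_inner \<Rightarrow> real"
  assumes D: "(F has_derivative (\<lambda>h. G \<bullet> h)) (at x)" and min: "\<And>y. F x \<le> F y"
  shows "G = 0"
proof -
  have "(\<lambda>h. G \<bullet> h) = (\<lambda>h. 0)"
    by (rule differential_zero_maxmin[of x UNIV]) (use D min in auto)
  then show ?thesis by (metis inner_eq_zero_iff)
qed

lemma strong_convexity_le_smoothness:
  fixes F :: "'a::euclidean_space \<Rightarrow> real"
  assumes C: "strongly_convex \<mu> F"
    and D: "\<And>x. (F has_derivative (\<lambda>h. G x \<bullet> h)) (at x)"
    and Lip: "\<And>x y. norm (G x - G y) \<le> L * norm (x - y)"
  shows "\<mu> \<le> L"
proof -
  obtain e :: 'a where "e \<in> Basis" using nonempty_Basis by blast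
  moreover have "F 0 + G 0 \<bullet> (e - 0) + \<mu>/2 * (norm (e - 0))\<^sup>2 \<le> F e"
    by (rule strongly_convex_gradient_inequality[OF C D])
  moreover have "F (0 + e) \<le> F 0 + G 0 \<bullet> e + L/2 * (norm e)\<^sup>2"
    by (rule smooth_upper_bound[OF D Lip])
  ultimately show ?thesis by simp
qed

lemma extrapolation_difference:
  fixes x z :: "'a::real_vector"
  assumes "c * (1 - \<alpha>) = \<alpha>"
  shows "z - (\<alpha> *\<^sub>R x + (1 - \<alpha>) *\<^sub>R z) = c *\<^sub>R ((\<alpha> *\<^sub>R x + (1 - \<alpha>) *\<^sub>R z) - x)"
proof -
  have "z - (\<alpha> *\<^sub>R x + (1 - \<alpha>) *\<^sub>R z) = \<alpha> *\<^sub>R (z - x)"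
    "(\<alpha> *\<^sub>R x + (1 - \<alpha>) *\<^sub>R z) - x = (1 - \<alpha>) *\<^sub>R (z - x)"
    by (simp_all add: algebra_simps)
  then show ?thesis using assms by simp
qed

lemma gradient_bound_at_extrapolation:
  fixes F :: "'a::real_inner \<Rightarrow> real"
  assumes grad_ineq: "\<And>u. F y + G y \<bullet> (u - y) + \<mu>/2 * (norm (u - y))\<^sup>2 \<le> F u"
    and "0 \<le> \<mu>" "0 \<le> c" and "w - y = c *\<^sub>R (y - x)" and "F xstar = fstar"
  shows "c * (F y - F x) + (F y - fstar + \<mu>/2 * (norm (y - xstar))\<^sup>2) \<le> (w - xstar) \<bullet> G y"
proof -
  have key: "F y - F u + \<mu>/2 * (norm (y - u))\<^sup>2 \<le> (y - u) \<bullet> G y" for u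
  proof -
    have "G y \<bullet> (u - y) = - ((y - u) \<bullet> G y)" "\<mu>/2 * (norm (u - y))\<^sup>2 = \<mu>/2 * (norm (y - u))\<^sup>2"
      by (simp_all add: inner_diff_left inner_diff_right inner_commute[of "G y"] norm_minus_commute)
    then show ?thesis using grad_ineq[of u] by linarith
  qed
  have "0 \<le> \<mu>/2 * (norm (y - x))\<^sup>2" using \<open>0 \<le> \<mu>\<close> by simp
  then have "c * (F y - F x) \<le> c * ((y - x) \<bullet> G y)"
    using key[of x] \<open>0 \<le> c\<close> by (intro mult_left_mono) auto
  then have "c * (F y - F x) \<le> (w - y) \<bullet> G y"
    using \<open>w - y = c *\<^sub>R (y - x)\<close> by simp
  moreover have "(w - xstar) \<bullet> G y = (w - y) \<bullet> G y + (y - xstar) \<bullet> G y"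
    by (simp add: inner_diff_left)
  ultimately show ?thesis
    using key[of xstar] \<open>F xstar = fstar\<close> by linarith
qed

section \<open>The finite-sum objective and mini-batch gradients\<close>

lemma has_derivative_favg:
  fixes fs :: "nat \<Rightarrow> 'a::real_inner \<Rightarrow> real"
  assumes "\<And>i x. i < N \<Longrightarrow> (fs i has_derivative (\<lambda>h. g i x \<bullet> h)) (at x)"
  shows "(favg N fs has_derivative (\<lambda>h. gavg N g x \<bullet> h)) (at x)"
proof -
  have "((\<lambda>x. 1 / real N * (\<Sum>i<N. fs i x)) has_derivative (\<lambda>h. 1 / real N * (\<Sum>i<N. g i x \<bullet> h))) (at x)"
    using assms by (intro has_derivative_mult_right has_derivative_sum) auto
  then show ?thesis
    unfolding favg_def[abs_def] gavg_def by (simp add: inner_sum_left)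
qed

lemma finite_batches: "finite (batches N K)"
  unfolding batches_def by (rule finite_subset[of _ "Pow {..<N}"]) auto

lemma card_batches: "card (batches N K) = N choose K"
  unfolding batches_def using n_subsets[of "{..<N}" K] by simp

lemma batches_nonempty: "K \<le> N \<Longrightarrow> batches N K \<noteq> {}"
  using card_batches[of N K] finite_batches[of N K] by auto

lemma set_pmf_of_batches: "K \<le> N \<Longrightarrow> set_pmf (pmf_of_set (batches N K)) = batches N K"
  by (simp add: finite_batches batches_nonempty)

lemma card_batches_containing:
  assumes "i < N" and "1 \<le> K"
  shows "card {B \<in> batches N K. i \<in> B} = (N - 1) choose (K - 1)"
proof -
  let ?C = "{C. C \<subseteq> {..<N} - {i} \<and> card C = K - 1}"
  have "{B \<in> batches N K. i \<in> B} = insert i ` ?C"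
  proof (intro equalityI subsetI)
    fix B assume "B \<in> {B \<in> batches N K. i \<in> B}"
    then have B: "B \<subseteq> {..<N}" "card B = K" "i \<in> B" unfolding batches_def by auto
    then have "B - {i} \<in> ?C" using finite_subset[OF B(1)] by auto
    moreover have "B = insert i (B - {i})" using B by auto
    ultimately show "B \<in> insert i ` ?C" by blast
  next
    fix B assume "B \<in> insert i ` ?C"
    then obtain C where C: "C \<subseteq> {..<N} - {i}" "card C = K - 1" "B = insert i C" by auto
    have "i \<notin> C" using C(1) by auto
    then have "card B = K" using finite_subset[OF C(1)] C \<open>1 \<le> K\<close> by auto
    then show "B \<in> {B \<in> batches N K. i \<in> B}" using C \<open>i < N\<close> unfolding batches_def by auto
  qed
  moreover have "inj_on (insert i) ?C"
    by (rule inj_onI) (metis Diff_iff insert_ident mem_Collect_eq singletonI subsetD)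
  ultimately have "card {B \<in> batches N K. i \<in> B} = card ({..<N} - {i}) choose (K - 1)"
    by (simp add: card_image n_subsets del: One_nat_def)
  then show ?thesis using \<open>i < N\<close> by simp
qed

text \<open>Each index lies in \<open>(N-1 choose K-1)\<close> batches, and \<open>K (N choose K) = N (N-1 choose K-1)\<close>.\<close>
lemma sum_sgrad_batches:
  fixes g :: "nat \<Rightarrow> 'a \<Rightarrow> 'a::real_vector"
  assumes K: "1 \<le> K" "K \<le> N"
  shows "(\<Sum>B\<in>batches N K. sgrad K g B y) = real (card (batches N K)) *\<^sub>R gavg N g y"
proof -
  let ?S = "batches N K"
  have "(\<Sum>B\<in>?S. \<Sum>i\<in>B. g i y) = (\<Sum>B\<in>?S. \<Sum>i<N. if i \<in> B then g i y else 0)"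
  proof (rule sum.cong[OF refl])
    fix B assume "B \<in> ?S"
    then have "{i \<in> {..<N}. i \<in> B} = B" unfolding batches_def by auto
    then show "(\<Sum>i\<in>B. g i y) = (\<Sum>i<N. if i \<in> B then g i y else 0)"
      using sum.inter_filter[of "{..<N}" "\<lambda>i. g i y" "\<lambda>i. i \<in> B"] by simp
  qed
  also have "\<dots> = (\<Sum>i<N. \<Sum>B\<in>?S. if i \<in> B then g i y else 0)"
    by (rule sum.swap)
  also have "\<dots> = (\<Sum>i<N. real ((N - 1) choose (K - 1)) *\<^sub>R g i y)"
  proof (rule sum.cong[OF refl])
    fix i assume "i \<in> {..<N}"
    have "(\<Sum>B\<in>?S. if i \<in> B then g i y else 0) = (\<Sum>B\<in>{B \<in> ?S. i \<in> B}. g i y)"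
      by (rule sum.inter_filter[OF finite_batches, symmetric])
    then show "(\<Sum>B\<in>?S. if i \<in> B then g i y else 0) = real ((N - 1) choose (K - 1)) *\<^sub>R g i y"
      using card_batches_containing[of i N K] K \<open>i \<in> {..<N}\<close> by (simp add: sum_constant_scaleR del: One_nat_def)
  qed
  finally have sum_eq: "(\<Sum>B\<in>?S. \<Sum>i\<in>B. g i y) = real ((N - 1) choose (K - 1)) *\<^sub>R (\<Sum>i<N. g i y)"
    by (simp add: scaleR_sum_right)
  have "real K * real (N choose K) = real N * real ((N - 1) choose (K - 1))"
    using times_binomial_minus1_eq[of K N] K by (metis of_nat_mult less_le_trans zero_less_one le_less)
  then have "1 / real K * real ((N - 1) choose (K - 1)) = real (N choose K) * (1 / real N)"
    using K by (simp add: field_simps)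
  then show ?thesis
    unfolding sgrad_def gavg_def card_batches scaleR_sum_right[symmetric] sum_eq by simp
qed

lemma sgrad_unbiased:
  fixes g :: "nat \<Rightarrow> 'a \<Rightarrow> 'a::real_inner"
  assumes "1 \<le> K" "K \<le> N"
  shows "measure_pmf.expectation (pmf_of_set (batches N K)) (\<lambda>B. u \<bullet> sgrad K g B y) = u \<bullet> gavg N g y"
proof -
  have "real (card (batches N K)) > 0"
    using assms finite_batches batches_nonempty by (simp add: card_gt_0_iff)
  then show ?thesis
    using sum_sgrad_batches[OF assms, of g y] assms
    by (simp add: integral_pmf_of_set finite_batches batches_nonempty inner_sum_right[symmetric])
qed

section \<open>Expectations over random batches\<close>

lemma expectation_smooth_step_le:
  fixes F :: "'a::real_inner \<Rightarrow> real" and Q :: "'b pmf" and v :: "'b \<Rightarrow> 'a"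
  assumes fin: "finite (set_pmf Q)"
    and D: "\<And>x. (F has_derivative (\<lambda>h. G x \<bullet> h)) (at x)"
    and Lip: "\<And>x y. norm (G x - G y) \<le> L * norm (x - y)" and "0 \<le> L"
    and unbiased: "\<And>u. measure_pmf.expectation Q (\<lambda>B. u \<bullet> v B) = u \<bullet> G y"
    and variance: "measure_pmf.expectation Q (\<lambda>B. (norm (v B))\<^sup>2) \<le> \<rho> * (norm (G y))\<^sup>2"
  shows "measure_pmf.expectation Q (\<lambda>B. F (y - s *\<^sub>R v B))
           \<le> F y - (s - L/2 * s\<^sup>2 * \<rho>) * (norm (G y))\<^sup>2"
proof -
  note integrable = integrable_measure_pmf_finite[OF fin]
  have "measure_pmf.expectation Q (\<lambda>B. F (y - s *\<^sub>R v B))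
      \<le> measure_pmf.expectation Q (\<lambda>B. F y - s * (G y \<bullet> v B) + L/2 * s\<^sup>2 * (norm (v B))\<^sup>2)"
  proof (rule integral_mono[OF integrable integrable])
    fix B
    show "F (y - s *\<^sub>R v B) \<le> F y - s * (G y \<bullet> v B) + L/2 * s\<^sup>2 * (norm (v B))\<^sup>2"
      using smooth_upper_bound[OF D Lip, of y "- s *\<^sub>R v B"] by (simp add: power_mult_distrib)
  qed
  also have "\<dots> = F y - s * (norm (G y))\<^sup>2
      + L/2 * s\<^sup>2 * measure_pmf.expectation Q (\<lambda>B. (norm (v B))\<^sup>2)"
    by (simp add: integrable unbiased power2_norm_eq_inner)
  also have "\<dots> \<le> F y - s * (norm (G y))\<^sup>2 + L/2 * s\<^sup>2 * (\<rho> * (norm (G y))\<^sup>2)"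
    using variance \<open>0 \<le> L\<close> by (intro add_left_mono mult_left_mono) auto
  finally show ?thesis by (simp add: algebra_simps)
qed

lemma expectation_sq_dist_step:
  fixes Q :: "'b pmf" and v :: "'b \<Rightarrow> 'a::real_inner"
  assumes fin: "finite (set_pmf Q)"
    and unbiased: "\<And>u. measure_pmf.expectation Q (\<lambda>B. u \<bullet> v B) = u \<bullet> G"
    and variance: "measure_pmf.expectation Q (\<lambda>B. (norm (v B))\<^sup>2) \<le> \<rho> * (norm G)\<^sup>2"
  shows "measure_pmf.expectation Q (\<lambda>B. (norm (w - \<eta> *\<^sub>R v B - p))\<^sup>2)
           \<le> (norm (w - p))\<^sup>2 - 2 * \<eta> * ((w - p) \<bullet> G) + \<eta>\<^sup>2 * \<rho> * (norm G)\<^sup>2"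
proof -
  note integrable = integrable_measure_pmf_finite[OF fin]
  have "(norm (w - \<eta> *\<^sub>R v B - p))\<^sup>2
      = (norm (w - p))\<^sup>2 - 2 * \<eta> * ((w - p) \<bullet> v B) + \<eta>\<^sup>2 * (norm (v B))\<^sup>2" for B
    unfolding power2_norm_eq_inner
    by (simp add: inner_diff_left inner_diff_right inner_commute algebra_simps power2_eq_square)
  then have "measure_pmf.expectation Q (\<lambda>B. (norm (w - \<eta> *\<^sub>R v B - p))\<^sup>2)
      = (norm (w - p))\<^sup>2 - 2 * \<eta> * ((w - p) \<bullet> G)
        + \<eta>\<^sup>2 * measure_pmf.expectation Q (\<lambda>B. (norm (v B))\<^sup>2)"
    by (simp add: integrable unbiased)
  also have "\<dots> \<le> (norm (w - p))\<^sup>2 - 2 * \<eta> * ((w - p) \<bullet> G) + \<eta>\<^sup>2 * (\<rho> * (norm G)\<^sup>2)"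
    using variance by (intro add_left_mono mult_left_mono) auto
  finally show ?thesis by (simp add: mult.assoc)
qed

lemma expectation_bind_pmf_nonneg:
  fixes f :: "'b \<Rightarrow> real"
  assumes fM: "finite (set_pmf M)" and fN: "\<And>x. finite (set_pmf (N x))" and nonneg: "\<And>x. 0 \<le> f x"
  shows "measure_pmf.expectation (bind_pmf M N) f
           = measure_pmf.expectation M (\<lambda>x. measure_pmf.expectation (N x) f)"
proof -
  have "finite (set_pmf (bind_pmf M N))" using fM fN by simp
  then have "ennreal (measure_pmf.expectation (bind_pmf M N) f) = (\<integral>\<^sup>+x. f x \<partial>bind_pmf M N)"
    by (intro nn_integral_eq_integral[symmetric]) (auto intro: integrable_measure_pmf_finite nonneg)
  also have "\<dots> = (\<integral>\<^sup>+x. ennreal (measure_pmf.expectation (N x) f) \<partial>M)"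
    by (simp, intro nn_integral_cong nn_integral_eq_integral)
       (auto intro: integrable_measure_pmf_finite[OF fN] nonneg)
  also have "\<dots> = ennreal (measure_pmf.expectation M (\<lambda>x. measure_pmf.expectation (N x) f))"
    by (intro nn_integral_eq_integral)
       (auto intro!: integrable_measure_pmf_finite[OF fM] AE_I2 Bochner_Integration.integral_nonneg nonneg)
  finally show ?thesis
    by (subst (asm) ennreal_inj) (auto intro: Bochner_Integration.integral_nonneg nonneg)
qed

lemma finite_set_pmf_snag:
  assumes "K \<le> N"
  shows "finite (set_pmf (snag_pmf N K g s \<beta> \<alpha> \<eta> x0 n))"
  by (induction n) (simp_all add: set_pmf_of_batches[OF assms] finite_batches)

lemma expectation_snag_le_power:
  fixes E :: "nat \<Rightarrow> 'a::real_vector \<times> 'a \<Rightarrow> real"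
  assumes "K \<le> N" and nonneg: "\<And>k st. 0 \<le> E k st" and "0 \<le> r"
    and step: "\<And>k st. measure_pmf.expectation (pmf_of_set (batches N K))
                  (\<lambda>B. E (Suc k) (snag_step K g s \<beta> \<alpha> \<eta> k st B)) \<le> r * E k st"
  shows "measure_pmf.expectation (snag_pmf N K g s \<beta> \<alpha> \<eta> x0 n) (E n) \<le> r ^ n * E 0 (x0, x0)"
proof (induction n)
  case (Suc n)
  let ?P = "snag_pmf N K g s \<beta> \<alpha> \<eta> x0 n" and ?Q = "pmf_of_set (batches N K)"
  note finite = finite_set_pmf_snag[OF \<open>K \<le> N\<close>]
  have "measure_pmf.expectation (snag_pmf N K g s \<beta> \<alpha> \<eta> x0 (Suc n)) (E (Suc n))
      = measure_pmf.expectation ?P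
          (\<lambda>st. measure_pmf.expectation ?Q (\<lambda>B. E (Suc n) (snag_step K g s \<beta> \<alpha> \<eta> n st B)))"
    using \<open>K \<le> N\<close> by (simp add: expectation_bind_pmf_nonneg finite set_pmf_of_batches finite_batches nonneg)
  also have "\<dots> \<le> measure_pmf.expectation ?P (\<lambda>st. r * E n st)"
    by (intro integral_mono integrable_measure_pmf_finite finite step)
  also have "\<dots> \<le> r * (r ^ n * E 0 (x0, x0))"
    using Suc.IH \<open>0 \<le> r\<close> by (simp add: mult_left_mono)
  finally show ?case by simp
qed simp

lemma one_minus_power_le_of_ln_le:
  fixes q C \<epsilon> :: real
  assumes "0 < q" "q \<le> 1" "0 \<le> C" "0 < \<epsilon>" and n: "ln (C / \<epsilon>) \<le> q * n"
  shows "(1 - q) ^ n * C \<le> \<epsilon>"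
proof (cases "C = 0")
  case False
  then have "0 < C" using \<open>0 \<le> C\<close> by simp
  have "(1 - q) ^ n \<le> exp (- q) ^ n"
    using \<open>q \<le> 1\<close> exp_ge_add_one_self[of "- q"] by (intro power_mono) auto
  also have "\<dots> = exp (- (q * n))" by (simp add: exp_of_nat_mult[symmetric] mult.commute)
  also have "\<dots> \<le> exp (- ln (C / \<epsilon>))" using n by simp
  also have "\<dots> = \<epsilon> / C" using \<open>0 < C\<close> \<open>0 < \<epsilon>\<close> by (simp add: exp_minus)
  finally show ?thesis using \<open>0 < C\<close> by (simp add: field_simps)
qed (use \<open>0 < \<epsilon>\<close> in simp)

section \<open>The energy of SNAG\<close>

locale snag_setting =
  fixes N K :: nat and F :: "'a::euclidean_space \<Rightarrow> real" and g :: "nat \<Rightarrow> 'a \<Rightarrow> 'a"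
    and L \<rho> fstar :: real
  assumes batch_size: "1 \<le> K" "K \<le> N"
    and has_gradient: "\<And>x. (F has_derivative (\<lambda>h. gavg N g x \<bullet> h)) (at x)"
    and smooth: "\<And>x y. norm (gavg N g x - gavg N g y) \<le> L * norm (x - y)"
    and L_pos: "0 < L" and rho_ge_1: "1 \<le> \<rho>"
    and strong_growth: "\<And>x. measure_pmf.expectation (pmf_of_set (batches N K))
                           (\<lambda>B. (norm (sgrad K g B x))\<^sup>2) \<le> \<rho> * (norm (gavg N g x))\<^sup>2"
    and fstar_le: "\<And>x. fstar \<le> F x"
begin

abbreviation G :: "'a \<Rightarrow> 'a" where "G \<equiv> gavg N g"

abbreviation batch_pmf :: "nat set pmf" where "batch_pmf \<equiv> pmf_of_set (batches N K)"

definition energy :: "real \<Rightarrow> real \<Rightarrow> 'a \<Rightarrow> 'a \<times> 'a \<Rightarrow> real" where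
  "energy a b xstar st = a * (F (fst st) - fstar) + b/2 * (norm (snd st - xstar))\<^sup>2"

lemma energy_nonneg: "0 \<le> a \<Longrightarrow> 0 \<le> b \<Longrightarrow> 0 \<le> energy a b xstar st"
  unfolding energy_def using fstar_le[of "fst st"] by simp

lemma expectation_energy_snag_step:
  assumes "0 \<le> a" "0 \<le> b"
    and y_def: "y = \<alpha> k *\<^sub>R x + (1 - \<alpha> k) *\<^sub>R z" and w_def: "w = \<beta> *\<^sub>R z + (1 - \<beta>) *\<^sub>R y"
  shows "measure_pmf.expectation batch_pmf (\<lambda>B. energy a b xstar (snag_step K g s \<beta> \<alpha> \<eta> k (x, z) B))
     \<le> a * (F y - fstar - (s - L/2 * s\<^sup>2 * \<rho>) * (norm (G y))\<^sup>2)
       + b/2 * ((norm (w - xstar))\<^sup>2 - 2 * \<eta> k * ((w - xstar) \<bullet> G y) + (\<eta> k)\<^sup>2 * \<rho> * (norm (G y))\<^sup>2)"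
proof -
  have fin: "finite (set_pmf batch_pmf)"
    using batch_size by (simp add: set_pmf_of_batches finite_batches)
  note unbiased = sgrad_unbiased[OF batch_size, of _ g y]
  have "snag_step K g s \<beta> \<alpha> \<eta> k (x, z) B = (y - s *\<^sub>R sgrad K g B y, w - \<eta> k *\<^sub>R sgrad K g B y)" for B
    unfolding snag_step_def y_def w_def by (simp add: Let_def)
  then have "measure_pmf.expectation batch_pmf (\<lambda>B. energy a b xstar (snag_step K g s \<beta> \<alpha> \<eta> k (x, z) B))
      = a * (measure_pmf.expectation batch_pmf (\<lambda>B. F (y - s *\<^sub>R sgrad K g B y)) - fstar)
        + b/2 * measure_pmf.expectation batch_pmf (\<lambda>B. (norm (w - \<eta> k *\<^sub>R sgrad K g B y - xstar))\<^sup>2)"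
    by (simp add: energy_def integrable_measure_pmf_finite[OF fin] algebra_simps)
  also have "\<dots> \<le> a * (F y - (s - L/2 * s\<^sup>2 * \<rho>) * (norm (G y))\<^sup>2 - fstar)
        + b/2 * ((norm (w - xstar))\<^sup>2 - 2 * \<eta> k * ((w - xstar) \<bullet> G y) + (\<eta> k)\<^sup>2 * \<rho> * (norm (G y))\<^sup>2)"
    using expectation_smooth_step_le[OF fin has_gradient smooth _ unbiased strong_growth, of s]
      expectation_sq_dist_step[OF fin unbiased strong_growth, of w "\<eta> k" xstar] L_pos assms(1,2)
    by (intro add_mono mult_left_mono diff_right_mono) auto
  finally show ?thesis by (simp add: algebra_simps)
qed

lemma strong_convexity_ratio_bounds:
  assumes sc: "strongly_convex \<mu> F" and "0 < \<mu>"
  shows "0 < 1 / \<rho> * sqrt (\<mu> / L)" and "1 / \<rho> * sqrt (\<mu> / L) \<le> 1"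
proof -
  have "\<mu> / L \<le> 1"
    using strong_convexity_le_smoothness[OF sc has_gradient smooth] L_pos by simp
  then have "sqrt (\<mu> / L) \<le> \<rho>" using rho_ge_1 real_sqrt_le_1_iff[of "\<mu> / L"] by linarith
  then show "1 / \<rho> * sqrt (\<mu> / L) \<le> 1"
    using rho_ge_1 by (simp add: field_simps)
  show "0 < 1 / \<rho> * sqrt (\<mu> / L)" using \<open>0 < \<mu>\<close> L_pos rho_ge_1 by simp
qed

lemma convex_energy_step:
  assumes convex: "convex_on UNIV F" and min: "F xstar = fstar"
  defines "s \<equiv> 1 / (L * \<rho>)"
    and "\<alpha> \<equiv> \<lambda>n. (real n ^ 2 / (real n + 1)) / (2 + real n ^ 2 / (real n + 1))"
    and "\<eta> \<equiv> \<lambda>n. 1 / (L * \<rho> ^ 2) * ((real n + 1) / 2)"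
    and "A \<equiv> \<lambda>k. real k ^ 2 / (4 * L * \<rho> ^ 2)"
  shows "measure_pmf.expectation batch_pmf (\<lambda>B. energy (A (Suc k)) 1 xstar (snag_step K g s 1 \<alpha> \<eta> k st B))
           \<le> energy (A k) 1 xstar st"
proof -
  obtain x z where st: "st = (x, z)" by (cases st)
  define y where "y = \<alpha> k *\<^sub>R x + (1 - \<alpha> k) *\<^sub>R z"
  define c where "c = real k ^ 2 / (real k + 1) / 2"
  have \<rho>: "0 < \<rho>" using rho_ge_1 by simp
  have c: "0 \<le> c" unfolding c_def by simp
  have "0 \<le> \<eta> k" unfolding \<eta>_def using L_pos by simp
  have "c * (1 - \<alpha> k) = \<alpha> k"
    unfolding c_def \<alpha>_def by (simp add: field_simps add_nonneg_eq_0_iff)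
  then have "z - y = c *\<^sub>R (y - x)"
    unfolding y_def by (rule extrapolation_difference)
  moreover have "F y + G y \<bullet> (u - y) + 0/2 * (norm (u - y))\<^sup>2 \<le> F u" for u
    using convex_on_gradient_inequality[OF convex has_gradient] by simp
  ultimately have grad: "c * (F y - F x) + (F y - fstar) \<le> (z - xstar) \<bullet> G y"
    using gradient_bound_at_extrapolation[of F y G 0 c z x xstar fstar] c min by simp
  have "measure_pmf.expectation batch_pmf (\<lambda>B. energy (A (Suc k)) 1 xstar (snag_step K g s 1 \<alpha> \<eta> k st B))
      \<le> A (Suc k) * (F y - fstar - (s - L/2 * s\<^sup>2 * \<rho>) * (norm (G y))\<^sup>2)
        + 1/2 * ((norm (z - xstar))\<^sup>2 - 2 * \<eta> k * ((z - xstar) \<bullet> G y) + (\<eta> k)\<^sup>2 * \<rho> * (norm (G y))\<^sup>2)"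
    unfolding st using L_pos
    by (intro expectation_energy_snag_step) (simp_all add: A_def y_def)
  text \<open>The choice of \<open>A\<close> and \<open>\<eta>\<close> makes the gradient-norm terms cancel.\<close>
  also have "\<dots> = A (Suc k) * (F y - fstar) - \<eta> k * ((z - xstar) \<bullet> G y) + 1/2 * (norm (z - xstar))\<^sup>2"
    unfolding A_def s_def \<eta>_def using L_pos \<rho> by (simp add: field_simps power2_eq_square)
  also have "\<dots> \<le> (A (Suc k) - \<eta> k - \<eta> k * c) * (F y - fstar) + \<eta> k * c * (F x - fstar)
                  + 1/2 * (norm (z - xstar))\<^sup>2"
    using mult_left_mono[OF grad, of "\<eta> k"] \<open>0 \<le> \<eta> k\<close> by (simp add: algebra_simps)
  also have "\<dots> \<le> A k * (F x - fstar) + 1/2 * (norm (z - xstar))\<^sup>2"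
  proof -
    have "\<eta> k * c = A k"
      unfolding \<eta>_def c_def A_def using L_pos \<rho>
      by (simp add: field_simps power2_eq_square add_nonneg_eq_0_iff)
    moreover have "A (Suc k) \<le> \<eta> k + A k"
      unfolding \<eta>_def A_def using L_pos \<rho> by (simp add: field_simps power2_eq_square)
    ultimately show ?thesis
      using fstar_le[of y] by (simp add: mult_nonpos_nonneg)
  qed
  finally show ?thesis unfolding st energy_def by simp
qed

lemma strongly_convex_energy_step:
  fixes \<mu> :: real
  assumes sc: "strongly_convex \<mu> F" and "0 < \<mu>" and min: "F xstar = fstar"
  defines "q \<equiv> 1 / \<rho> * sqrt (\<mu> / L)"
  shows "measure_pmf.expectation batch_pmf (\<lambda>B. energy 1 \<mu> xstar
             (snag_step K g (1 / (L * \<rho>)) (1 - q) (\<lambda>n. 1 / (1 + q)) (\<lambda>n. 1 / (\<rho> * sqrt (\<mu> * L))) k st B))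
           \<le> (1 - q) * energy 1 \<mu> xstar st"
proof -
  obtain x z where st: "st = (x, z)" by (cases st)
  define y where "y = (1 / (1 + q)) *\<^sub>R x + (1 - 1 / (1 + q)) *\<^sub>R z"
  define w where "w = (1 - q) *\<^sub>R z + (1 - (1 - q)) *\<^sub>R y"
  define \<eta> where "\<eta> = 1 / (\<rho> * sqrt (\<mu> * L))"
  have q: "0 < q" "q \<le> 1" unfolding q_def using strong_convexity_ratio_bounds[OF sc \<open>0 < \<mu>\<close>] by auto
  have "1 / q * (1 - 1 / (1 + q)) = 1 / (1 + q)" using q by (simp add: field_simps)
  then have "z - y = (1 / q) *\<^sub>R (y - x)"
    unfolding y_def by (rule extrapolation_difference)
  moreover have "w - y = (1 - q) *\<^sub>R (z - y)" unfolding w_def by (simp add: algebra_simps)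
  ultimately have "w - y = ((1 - q) / q) *\<^sub>R (y - x)" by simp
  then have "(1 - q) / q * (F y - F x) + (F y - fstar + \<mu>/2 * (norm (y - xstar))\<^sup>2)
      \<le> (w - xstar) \<bullet> G y"
    using gradient_bound_at_extrapolation[of F y G \<mu> "(1 - q) / q" w x xstar fstar]
      strongly_convex_gradient_inequality[OF sc has_gradient] q \<open>0 < \<mu>\<close> min by simp
  then have grad: "(1 - q) * (F y - F x) + q * (F y - fstar + \<mu>/2 * (norm (y - xstar))\<^sup>2)
      \<le> q * ((w - xstar) \<bullet> G y)"
    using mult_left_mono[of _ _ q] q by (fastforce simp: distrib_left)
  have "w - xstar = (1 - q) *\<^sub>R (z - xstar) + q *\<^sub>R (y - xstar)"
    unfolding w_def by (simp add: algebra_simps)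
  then have dist: "(norm (w - xstar))\<^sup>2 \<le> (1 - q) * (norm (z - xstar))\<^sup>2 + q * (norm (y - xstar))\<^sup>2"
    using norm_convex_combination_squared[of q "z - xstar" "y - xstar"] q by simp
  have "measure_pmf.expectation batch_pmf (\<lambda>B. energy 1 \<mu> xstar
             (snag_step K g (1 / (L * \<rho>)) (1 - q) (\<lambda>n. 1 / (1 + q)) (\<lambda>n. \<eta>) k st B))
      \<le> 1 * (F y - fstar - (1 / (L * \<rho>) - L/2 * (1 / (L * \<rho>))\<^sup>2 * \<rho>) * (norm (G y))\<^sup>2)
        + \<mu>/2 * ((norm (w - xstar))\<^sup>2 - 2 * \<eta> * ((w - xstar) \<bullet> G y) + \<eta>\<^sup>2 * \<rho> * (norm (G y))\<^sup>2)"
    unfolding st using \<open>0 < \<mu>\<close>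
    by (intro expectation_energy_snag_step) (simp_all add: y_def w_def)
  text \<open>The choice of \<open>\<eta>\<close> makes the gradient-norm terms cancel.\<close>
  also have "\<dots> = F y - fstar + \<mu>/2 * (norm (w - xstar))\<^sup>2 - (\<mu> * \<eta>) * ((w - xstar) \<bullet> G y)
        + (\<mu>/2 * \<eta>\<^sup>2 * \<rho> - (1 / (L * \<rho>) - L/2 * (1 / (L * \<rho>))\<^sup>2 * \<rho>)) * (norm (G y))\<^sup>2"
    by (simp add: algebra_simps)
  also have "\<dots> = F y - fstar + \<mu>/2 * (norm (w - xstar))\<^sup>2 - q * ((w - xstar) \<bullet> G y)"
  proof -
    obtain m l where "0 < m" "0 < l" "\<mu> = m\<^sup>2" "L = l\<^sup>2"
      using \<open>0 < \<mu>\<close> L_pos by (metis real_sqrt_gt_0_iff real_sqrt_pow2 less_le)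
    then have "\<mu> * \<eta> = q" "\<mu>/2 * \<eta>\<^sup>2 * \<rho> = 1 / (L * \<rho>) - L/2 * (1 / (L * \<rho>))\<^sup>2 * \<rho>"
      unfolding q_def \<eta>_def using rho_ge_1
      by (simp_all add: real_sqrt_mult real_sqrt_divide field_simps power2_eq_square)
    then show ?thesis by simp
  qed
  also have "\<dots> \<le> F y - fstar + \<mu>/2 * ((1 - q) * (norm (z - xstar))\<^sup>2 + q * (norm (y - xstar))\<^sup>2)
      - ((1 - q) * (F y - F x) + q * (F y - fstar + \<mu>/2 * (norm (y - xstar))\<^sup>2))"
    using grad mult_left_mono[OF dist, of "\<mu>/2"] \<open>0 < \<mu>\<close> by linarith
  also have "\<dots> = (1 - q) * energy 1 \<mu> xstar st"
    unfolding st energy_def by (simp add: field_simps)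
  finally show ?thesis unfolding \<eta>_def .
qed

lemma expectation_snag_le_energy:
  assumes "0 \<le> b"
  shows "a * measure_pmf.expectation (snag_pmf N K g s \<beta> \<alpha> \<eta> x0 n) (\<lambda>st. F (fst st) - fstar)
           \<le> measure_pmf.expectation (snag_pmf N K g s \<beta> \<alpha> \<eta> x0 n) (energy a b xstar)"
proof -
  have "a * measure_pmf.expectation (snag_pmf N K g s \<beta> \<alpha> \<eta> x0 n) (\<lambda>st. F (fst st) - fstar)
      = measure_pmf.expectation (snag_pmf N K g s \<beta> \<alpha> \<eta> x0 n) (\<lambda>st. a * (F (fst st) - fstar))"
    by simp
  also have "\<dots> \<le> measure_pmf.expectation (snag_pmf N K g s \<beta> \<alpha> \<eta> x0 n) (energy a b xstar)"
    unfolding energy_def using assms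
    by (intro integral_mono integrable_measure_pmf_finite finite_set_pmf_snag batch_size) auto
  finally show ?thesis .
qed

lemma convex_rate:
  assumes convex: "convex_on UNIV F" and min: "F xstar = fstar" and "0 < \<epsilon>"
    and n: "\<rho> * sqrt (2 * L / \<epsilon>) * norm (x0 - xstar) \<le> real n"
  shows "measure_pmf.expectation
           (snag_pmf N K g (1 / (L * \<rho>)) 1
              (\<lambda>n. (real n ^ 2 / (real n + 1)) / (2 + real n ^ 2 / (real n + 1)))
              (\<lambda>n. 1 / (L * \<rho> ^ 2) * ((real n + 1) / 2)) x0 n)
           (\<lambda>st. F (fst st) - fstar) \<le> \<epsilon>"
    (is "measure_pmf.expectation ?P _ \<le> _")
proof -
  define A where "A k = real k ^ 2 / (4 * L * \<rho> ^ 2)" for k :: nat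
  have \<rho>: "0 < \<rho>" using rho_ge_1 by simp
  have "measure_pmf.expectation ?P (energy (A n) 1 xstar) \<le> 1 ^ n * energy (A 0) 1 xstar (x0, x0)"
    using convex_energy_step[OF convex min] batch_size L_pos \<rho>
    by (intro expectation_snag_le_power energy_nonneg) (simp_all add: A_def)
  then have energy: "measure_pmf.expectation ?P (energy (A n) 1 xstar) \<le> 1/2 * (norm (x0 - xstar))\<^sup>2"
    by (simp add: energy_def A_def)
  show ?thesis
  proof (cases "n = 0")
    case True
    then have "x0 = xstar"
      using n L_pos \<rho> \<open>0 < \<epsilon>\<close> by (auto simp: mult_le_0_iff divide_le_0_iff)
    then show ?thesis using True min \<open>0 < \<epsilon>\<close> by simp
  next
    case False
    then have "0 < A n" unfolding A_def using L_pos \<rho> by simp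
    have "(\<rho> * sqrt (2 * L / \<epsilon>) * norm (x0 - xstar))\<^sup>2 \<le> (real n)\<^sup>2"
      using n L_pos \<rho> \<open>0 < \<epsilon>\<close> by (intro power_mono) auto
    then have "1/2 * (norm (x0 - xstar))\<^sup>2 \<le> A n * \<epsilon>"
      unfolding A_def using L_pos \<rho> \<open>0 < \<epsilon>\<close> by (simp add: power_mult_distrib field_simps)
    then have "A n * measure_pmf.expectation ?P (\<lambda>st. F (fst st) - fstar) \<le> A n * \<epsilon>"
      using expectation_snag_le_energy[of 1] energy by (meson order_trans zero_le_one)
    then show ?thesis using \<open>0 < A n\<close> by simp
  qed
qed

lemma strongly_convex_rate:
  assumes sc: "strongly_convex \<mu> F" and "0 < \<mu>" and min: "F xstar = fstar" and "0 < \<epsilon>"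
    and n: "\<rho> * sqrt (L / \<mu>) * ln (2 * (F x0 - fstar) / \<epsilon>) \<le> real n"
  shows "measure_pmf.expectation
           (snag_pmf N K g (1 / (L * \<rho>)) (1 - 1 / \<rho> * sqrt (\<mu> / L))
              (\<lambda>n. 1 / (1 + 1 / \<rho> * sqrt (\<mu> / L)))
              (\<lambda>n. 1 / (\<rho> * sqrt (\<mu> * L))) x0 n)
           (\<lambda>st. F (fst st) - fstar) \<le> \<epsilon>"
    (is "measure_pmf.expectation ?P _ \<le> _")
proof -
  define q where "q = 1 / \<rho> * sqrt (\<mu> / L)"
  have q: "0 < q" "q \<le> 1"
    unfolding q_def using strong_convexity_ratio_bounds[OF sc \<open>0 < \<mu>\<close>] by auto
  have "measure_pmf.expectation ?P (\<lambda>st. F (fst st) - fstar)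
      \<le> measure_pmf.expectation ?P (energy 1 \<mu> xstar)"
    using expectation_snag_le_energy[of \<mu> 1] \<open>0 < \<mu>\<close> by simp
  also have "\<dots> \<le> (1 - q) ^ n * energy 1 \<mu> xstar (x0, x0)"
    using strongly_convex_energy_step[OF sc \<open>0 < \<mu>\<close> min] batch_size q \<open>0 < \<mu>\<close>
    unfolding q_def by (intro expectation_snag_le_power energy_nonneg) simp_all
  also have "\<dots> \<le> (1 - q) ^ n * (2 * (F x0 - fstar))"
  proof -
    have "G xstar = 0"
      using gradient_zero_at_minimum[OF has_gradient] fstar_le min by metis
    then have "\<mu>/2 * (norm (x0 - xstar))\<^sup>2 \<le> F x0 - fstar"
      using strongly_convex_gradient_inequality[OF sc has_gradient, of xstar x0] min by simp
    then show ?thesis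
      unfolding energy_def using q by (intro mult_left_mono) auto
  qed
  also have "\<dots> \<le> \<epsilon>"
  proof (rule one_minus_power_le_of_ln_le[OF q _ \<open>0 < \<epsilon>\<close>])
    show "0 \<le> 2 * (F x0 - fstar)" using fstar_le[of x0] by simp
    have "q * (\<rho> * sqrt (L / \<mu>)) = 1"
      unfolding q_def using rho_ge_1 L_pos \<open>0 < \<mu>\<close>
      by (simp add: real_sqrt_mult[symmetric])
    then have "ln (2 * (F x0 - fstar) / \<epsilon>) = q * (\<rho> * sqrt (L / \<mu>) * ln (2 * (F x0 - fstar) / \<epsilon>))"
      by (metis mult.assoc mult_1)
    also have "\<dots> \<le> q * real n"
      using n q by (intro mult_left_mono) auto
    finally show "ln (2 * (F x0 - fstar) / \<epsilon>) \<le> q * real n" .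
  qed
  finally show ?thesis .
qed

end

theorem theorem3:
  fixes N K :: nat and fs :: "nat \<Rightarrow> 'a::euclidean_space \<Rightarrow> real"
    and g :: "nat \<Rightarrow> 'a \<Rightarrow> 'a" and L \<rho> \<epsilon> fstar :: real and x0 :: 'a
  assumes N2: "N \<ge> 2" and K: "1 \<le> K" "K \<le> N"
    and deriv: "\<And>i x. i < N \<Longrightarrow> (fs i has_derivative (\<lambda>h. g i x \<bullet> h)) (at x)"
    and cont: "\<And>i. i < N \<Longrightarrow> continuous_on UNIV (g i)"
    and fstar_min: "\<And>x. fstar \<le> favg N fs x"
    and fstar_att: "\<exists>x. favg N fs x = fstar"
    and Lpos: "L > 0"
    and smooth: "\<And>x y. norm (gavg N g x - gavg N g y) \<le> L * norm (x - y)"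
    and rho: "\<rho> \<ge> 1"
    and SGC: "\<And>x. measure_pmf.expectation (pmf_of_set (batches N K)) (\<lambda>B. (norm (sgrad K g B x))\<^sup>2)
                  \<le> \<rho> * (norm (gavg N g x))\<^sup>2"
    and eps: "\<epsilon> > 0"
  shows
    "(\<forall>xstar. convex_on UNIV (favg N fs) \<and> favg N fs xstar = fstar \<longrightarrow>
       (\<forall>n::nat. real n \<ge> \<rho> * sqrt (2 * L / \<epsilon>) * norm (x0 - xstar) \<longrightarrow>
          measure_pmf.expectation
            (snag_pmf N K g (1 / (L * \<rho>)) 1
               (\<lambda>n. (real n ^ 2 / (real n + 1)) / (2 + real n ^ 2 / (real n + 1)))
               (\<lambda>n. 1 / (L * \<rho> ^ 2) * ((real n + 1) / 2)) x0 n)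
            (\<lambda>st. favg N fs (fst st) - fstar) \<le> \<epsilon>))
   \<and> (\<forall>\<mu>. \<mu> > 0 \<and> strongly_convex \<mu> (favg N fs) \<longrightarrow>
       (\<forall>n::nat. real n \<ge> \<rho> * sqrt (L / \<mu>) * ln (2 * (favg N fs x0 - fstar) / \<epsilon>) \<longrightarrow>
          measure_pmf.expectation
            (snag_pmf N K g (1 / (L * \<rho>)) (1 - 1 / \<rho> * sqrt (\<mu> / L))
               (\<lambda>n. 1 / (1 + 1 / \<rho> * sqrt (\<mu> / L)))
               (\<lambda>n. 1 / (\<rho> * sqrt (\<mu> * L))) x0 n)
            (\<lambda>st. favg N fs (fst st) - fstar) \<le> \<epsilon>))"
proof -
  interpret snag_setting N K "favg N fs" g L \<rho> fstar
    using K has_derivative_favg[OF deriv] smooth Lpos rho SGC fstar_min by unfold_locales auto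
  obtain xstar where "favg N fs xstar = fstar" using fstar_att by blast
  then show ?thesis
    using convex_rate[OF _ _ eps] strongly_convex_rate[OF _ _ _ eps] by blast
qed

end
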